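(* Let $m,n$ be natural numbers with $\min\{m,n\}\ge4$, let $\{|e_i\rangle\}_{i=0}^{m-1}$ and $\{|f_j\rangle\}_{j=0}^{n-1}$ be the canonical bases of $\mathbb{C}^m$ and $\mathbb{C}^n$, and let $a\in\mathbb{R}$. Define subspaces of $\mathbb{C}^m\otimes\mathbb{C}^n$: $$\mathcal{T}=\mathrm{span}\{|e_{i-2}\rangle\otimes|f_{j+1}\rangle+(a+1)|e_{i-1}\rangle\otimes|f_j\rangle+(a+1)|e_i\rangle\otimes|f_{j-1}\rangle+|e_{i+1}\rangle\otimes|f_{j-2}\rangle:\ 2\le i\le m-2,\ 2\le j\le n-2\},$$ $$\mathcal{S}=\mathrm{span}\{|e_{i-1}\rangle\otimes|f_{j+1}\rangle+a|e_i\rangle\otimes|f_j\rangle+|e_{i+1}\rangle\otimes|f_{j-1}\rangle:\ 1\le i\le m-2,\ 1\le j\le n-2\}.$$ Then: (1) $\mathcal{T}\subset\mathcal{S}$; (2) if $|a|\ge2$, then $\mathcal{S}$ does not contain any non-zero vector of Schmidt rank $\le2$, and $\dim\mathcal{S}=(m-2)(n-2)$; (3) if $a>4$, then $\mathcal{T}$ does not contain any non-zero vector of Schmidt rank $\le3$, and $\dim\mathcal{T}=(m-3)(n-3)$; (4) if $a>4$, then there is at least one vector of Schmidt rank $3$ in $\mathcal{S}\setminus\mathcal{T}$.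
   Context: The Schmidt rank of $|\psi\rangle=\sum_{i,j}c_{ij}|e_i\rangle\otimes|f_j\rangle\in\mathbb{C}^m\otimes\mathbb{C}^n$ is the minimal number of terms in a decomposition $|\psi\rangle=\sum_{l=1}^r|u_l\rangle\otimes|v_l\rangle$; equivalently, the rank of the matrix $[c_{ij}]$. (The paper presents $\mathcal{T}$ and $\mathcal{S}$ as direct sums over anti-diagonal index $d$ of the spans of generators with $i+j=d+1$, respectively $i+j=d$; these are the same subspaces.) *)

theory Defs
  imports Complex_Main "HOL-Library.Function_Algebras"
begin

text \<open>A vector of C^m (x) C^n is represented by its coefficient array
  c :: nat => nat => complex, where c i j is the coefficient of e_i (x) f_j
  (only 0 <= i < m, 0 <= j < n are relevant; all vectors considered vanish outside).\<close>

type_synonym tensor = "nat \<Rightarrow> nat \<Rightarrow> complex"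

definition tscale :: "complex \<Rightarrow> tensor \<Rightarrow> tensor" where
  "tscale c x = (\<lambda>i j. c * x i j)"

definition ket :: "nat \<Rightarrow> nat \<Rightarrow> tensor" where
  "ket i j = (\<lambda>p q. if p = i \<and> q = j then 1 else 0)"

definition cspan :: "tensor set \<Rightarrow> tensor set" where
  "cspan S = module.span tscale S"

definition cdim :: "tensor set \<Rightarrow> nat" where
  "cdim S = vector_space.dim tscale S"

definition schmidt_rank :: "nat \<Rightarrow> nat \<Rightarrow> tensor \<Rightarrow> nat" where
  "schmidt_rank m n psi = (LEAST r. \<exists>u v :: nat \<Rightarrow> nat \<Rightarrow> complex.
      \<forall>i<m. \<forall>j<n. psi i j = (\<Sum>l<r. u l i * v l j))"

definition T_gen :: "real \<Rightarrow> nat \<Rightarrow> nat \<Rightarrow> tensor" where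
  "T_gen a i j = ket (i - 2) (j + 1) + tscale (complex_of_real (a + 1)) (ket (i - 1) j)
      + tscale (complex_of_real (a + 1)) (ket i (j - 1)) + ket (i + 1) (j - 2)"

definition S_gen :: "real \<Rightarrow> nat \<Rightarrow> nat \<Rightarrow> tensor" where
  "S_gen a i j = ket (i - 1) (j + 1) + tscale (complex_of_real a) (ket i j) + ket (i + 1) (j - 1)"

definition T_space :: "nat \<Rightarrow> nat \<Rightarrow> real \<Rightarrow> tensor set" where
  "T_space m n a = cspan {T_gen a i j | i j. 2 \<le> i \<and> i \<le> m - 2 \<and> 2 \<le> j \<and> j \<le> n - 2}"

definition S_space :: "nat \<Rightarrow> nat \<Rightarrow> real \<Rightarrow> tensor set" where
  "S_space m n a = cspan {S_gen a i j | i j. 1 \<le> i \<and> i \<le> m - 2 \<and> 1 \<le> j \<and> j \<le> n - 2}"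

end

theory Submission
  imports Defs
begin

(*
  Pair a tensor M with a real weight sequence phi along the antidiagonal i + j = d:
  L(phi, d, M) = sum over q <= d of M (d - q) q * phi q.  A generator of S lies on one
  antidiagonal and is killed by L(phi, d) whenever phi (t + 2) + a phi (t + 1) + phi t = 0,
  i.e. for the Lucas sequence U_t(-a, 1) and its shift.  A generator of T is the sum of two
  generators of S on the same antidiagonal, so it is also killed by phi t = (-1)^t.

  If M <> 0 is killed by a family of sequences whose evaluation vectors at any k points are
  linearly independent, then the lowest nonzero antidiagonal of M carries more than k nonzero
  entries, and the rows through these entries form a triangular minor: the Schmidt rank of M
  exceeds k.  For two points this independence is the nonvanishing Casoratian of U(-a) when
  |a| >= 2; for three points (adding (-1)^t) the determinant reduces, up to sign, to
  U_p + U_q - U_(p+q) for U = U(a), which is negative for a > 2 by convexity of U.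
  The dimensions hold because the generators have pivots in triangular position.
*)

section \<open>Tensors as a complex vector space\<close>

interpretation tensor: vector_space tscale
  by unfold_locales (auto simp: tscale_def algebra_simps fun_eq_iff)

lemma tensor_sum_apply: "(sum f A :: tensor) p q = (\<Sum>x\<in>A. f x p q)"
  by (induction A rule: infinite_finite_induct) auto

lemma independent_if_pivots:
  fixes g :: "'i \<Rightarrow> tensor" and key :: "'i \<Rightarrow> 'k::linorder"
  assumes "finite I"
    and pivot: "\<And>x. x \<in> I \<Longrightarrow> g x (pr x) (pc x) \<noteq> 0"
    and below: "\<And>x y. x \<in> I \<Longrightarrow> y \<in> I \<Longrightarrow> y \<noteq> x \<Longrightarrow> g y (pr x) (pc x) \<noteq> 0 \<Longrightarrow> key y < key x"
  shows "inj_on g I" and "tensor.independent (g ` I)"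
proof -
  show inj: "inj_on g I"
  proof (rule inj_onI, rule ccontr)
    fix x y assume "x \<in> I" "y \<in> I" "g x = g y" "x \<noteq> y"
    then have "key y < key x" "key x < key y"
      using below pivot by metis+
    then show False by simp
  qed
  show "tensor.independent (g ` I)"
  proof (rule tensor.independent_if_scalars_zero)
    fix c v
    assume sum: "(\<Sum>v\<in>g ` I. tscale (c v) v) = 0" and "v \<in> g ` I"
    show "c v = 0"
    proof (rule ccontr)
      assume "c v \<noteq> 0"
      define K where "K = {x \<in> I. c (g x) \<noteq> 0}"
      have "finite K" "K \<noteq> {}"
        using \<open>finite I\<close> \<open>v \<in> g ` I\<close> \<open>c v \<noteq> 0\<close> by (auto simp: K_def)
      define x where "x = arg_min_on key K"
      have "x \<in> K" and x_min: "\<And>y. y \<in> K \<Longrightarrow> \<not> key y < key x"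
        using arg_min_if_finite[OF \<open>finite K\<close> \<open>K \<noteq> {}\<close>] by (auto simp: x_def)
      have "0 = (\<Sum>y\<in>I. tscale (c (g y)) (g y)) (pr x) (pc x)"
        using sum by (simp add: sum.reindex[OF inj])
      also have "\<dots> = (\<Sum>y\<in>I. if y = x then c (g x) * g x (pr x) (pc x) else 0)"
        unfolding tensor_sum_apply tscale_def
        using below[of x] x_min \<open>x \<in> K\<close> by (intro sum.cong) (auto simp: K_def)
      also have "\<dots> = c (g x) * g x (pr x) (pc x)"
        using \<open>x \<in> K\<close> \<open>finite I\<close> by (simp add: K_def)
      finally show False
        using \<open>x \<in> K\<close> pivot by (auto simp: K_def)
    qed
  qed (use \<open>finite I\<close> in simp)
qed

lemma cdim_cspan_if_pivots:
  fixes g :: "'i \<Rightarrow> tensor" and key :: "'i \<Rightarrow> 'k::linorder"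
  assumes "finite I"
    and "\<And>x. x \<in> I \<Longrightarrow> g x (pr x) (pc x) \<noteq> 0"
    and "\<And>x y. x \<in> I \<Longrightarrow> y \<in> I \<Longrightarrow> y \<noteq> x \<Longrightarrow> g y (pr x) (pc x) \<noteq> 0 \<Longrightarrow> key y < key x"
  shows "cdim (cspan (g ` I)) = card I"
  using independent_if_pivots[of I g pr pc key, OF assms] tensor.dim_span_eq_card_independent card_image
  by (simp add: cdim_def cspan_def)

lemma card_le_if_triangular:
  fixes M :: tensor
  assumes dec: "\<forall>i<m. \<forall>j<n. M i j = (\<Sum>l<r. u l i * v l j)"
    and "finite J" "J \<subseteq> {..<n}" "\<rho> ` J \<subseteq> {..<m}"
    and diag: "\<And>j. j \<in> J \<Longrightarrow> M (\<rho> j) j \<noteq> 0"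
    and below: "\<And>j j'. j \<in> J \<Longrightarrow> j' \<in> J \<Longrightarrow> j' < j \<Longrightarrow> M (\<rho> j) j' = 0"
  shows "card J \<le> r"
proof -
  define row :: "nat \<Rightarrow> tensor" where "row j = (\<lambda>_ q. if q < n then M (\<rho> j) q else 0)" for j
  define V :: "nat \<Rightarrow> tensor" where "V l = (\<lambda>_ q. if q < n then v l q else 0)" for l
  have "inj_on row J" and indep: "tensor.independent (row ` J)"
    using independent_if_pivots[of J row "\<lambda>_. 0" "\<lambda>j. j" "\<lambda>j. j", OF \<open>finite J\<close>]
      diag below \<open>J \<subseteq> {..<n}\<close> unfolding row_def by (force simp: neq_iff)+
  have "row j = (\<Sum>l<r. tscale (u l (\<rho> j)) (V l))" if "j \<in> J" for j
    using dec that \<open>\<rho> ` J \<subseteq> {..<m}\<close>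
    by (auto simp: row_def V_def tensor_sum_apply tscale_def fun_eq_iff)
  then have "row ` J \<subseteq> tensor.span (V ` {..<r})"
    by (auto intro!: tensor.span_sum tensor.span_scale intro: tensor.span_base)
  then have "card (row ` J) \<le> card (V ` {..<r})"
    using tensor.independent_span_bound[OF _ indep] by simp
  also have "\<dots> \<le> r"
    using card_image_le[of "{..<r}" V] by simp
  finally show ?thesis
    using card_image[OF \<open>inj_on row J\<close>] by simp
qed

lemma cspan_supported:
  assumes "M \<in> cspan G" "\<And>g i j. g \<in> G \<Longrightarrow> g i j \<noteq> 0 \<Longrightarrow> i < m \<and> j < n"
    and "M i j \<noteq> 0"
  shows "i < m \<and> j < n"
proof -
  let ?box = "{M. \<forall>i j. \<not> (i < m \<and> j < n) \<longrightarrow> M i j = 0}"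
  have "tensor.subspace ?box"
    by (rule tensor.subspaceI) (auto simp: tscale_def)
  then have "tensor.span G \<subseteq> ?box"
    using assms(2) by (intro tensor.span_minimal) auto
  then show ?thesis using assms(1,3) by (auto simp: cspan_def)
qed

section \<open>Lower bounds for the Schmidt rank\<close>

lemma sum_unit_row:
  fixes M :: tensor
  shows "(\<Sum>l<r. (if l = i then 1 else 0) * M l j) = (if i < r then M i j else 0)"
proof -
  have "(\<Sum>l<r. (if l = i then 1 else 0) * M l j) = (\<Sum>l<r. if l = i then M l j else 0)"
    by (rule sum.cong) auto
  then show ?thesis by simp
qed

lemma schmidt_rank_le_rows:
  assumes "\<And>i j. r \<le> i \<Longrightarrow> M i j = 0"
  shows "schmidt_rank m n M \<le> r"
  unfolding schmidt_rank_def
proof (rule Least_le, intro exI allI impI)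
  fix i j
  show "M i j = (\<Sum>l<r. (if l = i then 1 else 0) * M l j)"
    using assms by (simp add: sum_unit_row)
qed

lemma schmidt_rank_decomposition:
  obtains u v where "\<forall>i<m. \<forall>j<n. M i j = (\<Sum>l<schmidt_rank m n M. u l i * v l j)"
proof -
  let ?decomposable = "\<lambda>r. \<exists>u v :: nat \<Rightarrow> nat \<Rightarrow> complex. \<forall>i<m. \<forall>j<n. M i j = (\<Sum>l<r. u l i * v l j)"
  have "?decomposable m"
    by (intro exI[of _ "\<lambda>l i. if l = i then 1 else 0"] exI[of _ "\<lambda>l j. M l j"]) (simp add: sum_unit_row)
  then have "?decomposable (Least ?decomposable)"
    by (rule LeastI)
  then show ?thesis
    using that unfolding schmidt_rank_def by blast
qed

lemma cramer_2:
  fixes g1 g2 a1 a2 b1 b2 :: "'a::idom"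
  assumes "g1 * a1 + g2 * a2 = 0" "g1 * b1 + g2 * b2 = 0" "a1 * b2 - a2 * b1 \<noteq> 0"
  shows "g1 = 0 \<and> g2 = 0"
proof -
  have "g1 * (a1 * b2 - a2 * b1) = 0" "g2 * (a1 * b2 - a2 * b1) = 0"
    using assms(1,2) by algebra+
  then show ?thesis using assms(3) by simp
qed

lemma cramer_3:
  fixes g1 g2 g3 a1 a2 a3 b1 b2 b3 c1 c2 c3 :: "'a::idom"
  assumes "g1 * a1 + g2 * a2 + g3 * a3 = 0" "g1 * b1 + g2 * b2 + g3 * b3 = 0"
    "g1 * c1 + g2 * c2 + g3 * c3 = 0"
    and "a1 * (b2 * c3 - b3 * c2) - a2 * (b1 * c3 - b3 * c1) + a3 * (b1 * c2 - b2 * c1) \<noteq> 0"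
  shows "g1 = 0 \<and> g2 = 0 \<and> g3 = 0"
proof -
  let ?D = "a1 * (b2 * c3 - b3 * c2) - a2 * (b1 * c3 - b3 * c1) + a3 * (b1 * c2 - b2 * c1)"
  have "g1 * ?D = 0" "g2 * ?D = 0" "g3 * ?D = 0"
    using assms(1-3) by algebra+
  then show ?thesis using assms(4) by simp
qed

definition evaluations_independent :: "nat \<Rightarrow> (nat \<Rightarrow> real) set \<Rightarrow> bool" where
  "evaluations_independent k \<Phi> \<longleftrightarrow>
     (\<forall>J \<gamma>. finite J \<and> card J \<le> k \<and> (\<forall>\<phi>\<in>\<Phi>. (\<Sum>j\<in>J. \<gamma> j * of_real (\<phi> j)) = 0)
        \<longrightarrow> (\<forall>j\<in>J. \<gamma> j = (0::complex)))"

lemma evaluations_independentI_card_eq: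
  assumes "\<And>J \<gamma>. finite J \<Longrightarrow> card J = k \<Longrightarrow> \<forall>\<phi>\<in>\<Phi>. (\<Sum>j\<in>J. \<gamma> j * of_real (\<phi> j)) = 0
             \<Longrightarrow> \<forall>j\<in>J. \<gamma> j = (0::complex)"
  shows "evaluations_independent k \<Phi>"
  unfolding evaluations_independent_def
proof (intro allI impI)
  fix J and \<gamma> :: "nat \<Rightarrow> complex"
  assume J: "finite J \<and> card J \<le> k \<and> (\<forall>\<phi>\<in>\<Phi>. (\<Sum>j\<in>J. \<gamma> j * of_real (\<phi> j)) = 0)"
  have "infinite (- J)"
    using J by (simp add: Compl_eq_Diff_UNIV Diff_infinite_finite)
  then obtain B where B: "finite B" "card B = k - card J" "B \<subseteq> - J"
    using infinite_arbitrarily_large by blast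
  define \<gamma>' where "\<gamma>' j = (if j \<in> J then \<gamma> j else 0)" for j
  have "card (J \<union> B) = k"
    using J B by (subst card_Un_disjoint) auto
  moreover have "(\<Sum>j\<in>J \<union> B. \<gamma>' j * of_real (\<phi> j)) = (\<Sum>j\<in>J. \<gamma> j * of_real (\<phi> j))" for \<phi>
  proof -
    have "(\<Sum>j\<in>B. \<gamma>' j * of_real (\<phi> j)) = 0"
      using B by (intro sum.neutral) (auto simp: \<gamma>'_def)
    moreover have "(\<Sum>j\<in>J. \<gamma>' j * of_real (\<phi> j)) = (\<Sum>j\<in>J. \<gamma> j * of_real (\<phi> j))"
      by (simp add: \<gamma>'_def)
    moreover have "J \<inter> B = {}"
      using B by auto
    ultimately show ?thesis
      using J B by (simp add: sum.union_disjoint)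
  qed
  ultimately have "\<forall>j\<in>J \<union> B. \<gamma>' j = 0"
    using assms[of "J \<union> B" \<gamma>'] J B by simp
  then show "\<forall>j\<in>J. \<gamma> j = 0"
    unfolding \<gamma>'_def by (metis UnI1)
qed

lemma card_2_sorted:
  fixes J :: "'a::linorder set"
  assumes "card J = 2"
  obtains x y where "x < y" "J = {x, y}"
  using assms by (auto simp: card_2_iff) (metis insert_commute linorder_neq_iff)

lemma card_3_sorted:
  fixes J :: "'a::linorder set"
  assumes "card J = 3"
  obtains x y z where "x < y" "y < z" "J = {x, y, z}"
proof -
  have "finite J" using assms by (intro card_ge_0_finite) simp
  have "length (sorted_list_of_set J) = 3" using assms by simp
  then obtain x y z where xyz: "sorted_list_of_set J = [x, y, z]"
    by (metis length_0_conv length_Suc_conv numeral_3_eq_3)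
  then have "x < y" "y < z"
    using strict_sorted_list_of_set[of J] by auto
  moreover have "J = {x, y, z}"
    using sorted_list_of_set(1)[OF \<open>finite J\<close>] xyz by simp
  ultimately show ?thesis by (rule that)
qed

lemma evaluations_independent_2I:
  assumes "\<And>x y. x < y \<Longrightarrow> \<phi>\<^sub>1 x * \<phi>\<^sub>2 y - \<phi>\<^sub>1 y * \<phi>\<^sub>2 x \<noteq> 0"
  shows "evaluations_independent 2 {\<phi>\<^sub>1, \<phi>\<^sub>2}"
proof (rule evaluations_independentI_card_eq)
  fix J and \<gamma> :: "nat \<Rightarrow> complex"
  assume "card J = 2" and eqs: "\<forall>\<phi>\<in>{\<phi>\<^sub>1, \<phi>\<^sub>2}. (\<Sum>j\<in>J. \<gamma> j * of_real (\<phi> j)) = 0"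
  then obtain x y where "x < y" and J: "J = {x, y}"
    by (elim card_2_sorted)
  have "of_real (\<phi>\<^sub>1 x * \<phi>\<^sub>2 y - \<phi>\<^sub>1 y * \<phi>\<^sub>2 x) \<noteq> (0::complex)"
    using assms[OF \<open>x < y\<close>] by (simp only: of_real_eq_0_iff not_False_eq_True)
  then show "\<forall>j\<in>J. \<gamma> j = 0"
    using cramer_2[of "\<gamma> x" "of_real (\<phi>\<^sub>1 x)" "\<gamma> y" "of_real (\<phi>\<^sub>1 y)" "of_real (\<phi>\<^sub>2 x)" "of_real (\<phi>\<^sub>2 y)"]
      eqs \<open>x < y\<close> J by auto
qed

lemma evaluations_independent_3I:
  assumes "\<And>x y z. x < y \<Longrightarrow> y < z \<Longrightarrow>
      \<phi>\<^sub>1 x * (\<phi>\<^sub>2 y * \<phi>\<^sub>3 z - \<phi>\<^sub>2 z * \<phi>\<^sub>3 y) - \<phi>\<^sub>1 y * (\<phi>\<^sub>2 x * \<phi>\<^sub>3 z - \<phi>\<^sub>2 z * \<phi>\<^sub>3 x)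
        + \<phi>\<^sub>1 z * (\<phi>\<^sub>2 x * \<phi>\<^sub>3 y - \<phi>\<^sub>2 y * \<phi>\<^sub>3 x) \<noteq> 0"
  shows "evaluations_independent 3 {\<phi>\<^sub>1, \<phi>\<^sub>2, \<phi>\<^sub>3}"
proof (rule evaluations_independentI_card_eq)
  fix J and \<gamma> :: "nat \<Rightarrow> complex"
  assume "card J = 3" and eqs: "\<forall>\<phi>\<in>{\<phi>\<^sub>1, \<phi>\<^sub>2, \<phi>\<^sub>3}. (\<Sum>j\<in>J. \<gamma> j * of_real (\<phi> j)) = 0"
  then obtain x y z where "x < y" "y < z" and J: "J = {x, y, z}"
    by (elim card_3_sorted)
  let ?c = "\<lambda>\<phi> j. complex_of_real (\<phi> j)"
  have "?c \<phi>\<^sub>1 x * (?c \<phi>\<^sub>2 y * ?c \<phi>\<^sub>3 z - ?c \<phi>\<^sub>2 z * ?c \<phi>\<^sub>3 y)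
      - ?c \<phi>\<^sub>1 y * (?c \<phi>\<^sub>2 x * ?c \<phi>\<^sub>3 z - ?c \<phi>\<^sub>2 z * ?c \<phi>\<^sub>3 x)
      + ?c \<phi>\<^sub>1 z * (?c \<phi>\<^sub>2 x * ?c \<phi>\<^sub>3 y - ?c \<phi>\<^sub>2 y * ?c \<phi>\<^sub>3 x) \<noteq> 0"
    using assms[OF \<open>x < y\<close> \<open>y < z\<close>] by (simp flip: of_real_mult of_real_diff of_real_add)
  then show "\<forall>j\<in>J. \<gamma> j = 0"
    using cramer_3[of "\<gamma> x" "?c \<phi>\<^sub>1 x" "\<gamma> y" "?c \<phi>\<^sub>1 y" "\<gamma> z" "?c \<phi>\<^sub>1 z"
        "?c \<phi>\<^sub>2 x" "?c \<phi>\<^sub>2 y" "?c \<phi>\<^sub>2 z" "?c \<phi>\<^sub>3 x" "?c \<phi>\<^sub>3 y" "?c \<phi>\<^sub>3 z"]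
      eqs \<open>x < y\<close> \<open>y < z\<close> J by (auto simp: add.assoc)
qed

definition antidiag_pairing :: "(nat \<Rightarrow> real) \<Rightarrow> nat \<Rightarrow> tensor \<Rightarrow> complex" where
  "antidiag_pairing \<phi> d M = (\<Sum>q\<le>d. M (d - q) q * of_real (\<phi> q))"

lemma antidiag_pairing_ket:
  "antidiag_pairing \<phi> d (ket p q) = (if p + q = d then of_real (\<phi> q) else 0)"
proof -
  have "antidiag_pairing \<phi> d (ket p q)
      = (\<Sum>x\<le>d. if x = q then (if p + q = d then of_real (\<phi> q) else 0) else 0)"
    unfolding antidiag_pairing_def by (rule sum.cong) (auto simp: ket_def)
  then show ?thesis by simp
qed

lemma antidiag_pairing_linear:
  "antidiag_pairing \<phi> d (M + N) = antidiag_pairing \<phi> d M + antidiag_pairing \<phi> d N"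
  "antidiag_pairing \<phi> d (tscale c M) = c * antidiag_pairing \<phi> d M"
  "antidiag_pairing \<phi> d 0 = 0"
  by (simp_all add: antidiag_pairing_def tscale_def algebra_simps sum.distrib sum_distrib_left)

lemma antidiag_pairing_cspan:
  assumes "M \<in> cspan G" "\<And>g. g \<in> G \<Longrightarrow> antidiag_pairing \<phi> d g = 0"
  shows "antidiag_pairing \<phi> d M = 0"
proof -
  have "tensor.subspace {M. antidiag_pairing \<phi> d M = 0}"
    by (rule tensor.subspaceI) (simp_all add: antidiag_pairing_linear)
  then have "tensor.span G \<subseteq> {M. antidiag_pairing \<phi> d M = 0}"
    using assms(2) by (intro tensor.span_minimal) auto
  then show ?thesis
    using assms(1) by (auto simp: cspan_def)
qed

lemma lowest_antidiagonal:
  fixes M :: tensor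
  assumes "M \<noteq> 0"
  obtains d where "\<exists>j\<le>d. M (d - j) j \<noteq> 0" and "\<And>i j. i + j < d \<Longrightarrow> M i j = 0"
proof -
  let ?on_antidiag = "\<lambda>d. \<exists>i j. i + j = d \<and> M i j \<noteq> 0"
  define d where "d = Least ?on_antidiag"
  obtain i j where "M i j \<noteq> 0"
    using assms by (auto simp: fun_eq_iff)
  then have "?on_antidiag (i + j)"
    by blast
  then have "?on_antidiag d"
    unfolding d_def by (rule LeastI)
  then obtain i' j' where "i' + j' = d" "M i' j' \<noteq> 0"
    by blast
  then have "\<exists>j\<le>d. M (d - j) j \<noteq> 0"
    by (intro exI[of _ j']) auto
  moreover have "M i j = 0" if "i + j < d" for i j
    using not_less_Least[OF that[unfolded d_def]] by blast
  ultimately show ?thesis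
    by (rule that)
qed

text \<open>The annihilation conditions on the lowest nonzero antidiagonal \<open>d\<close> are a linear relation
  among the evaluation vectors at the columns \<open>J\<close> of its nonzero entries, so \<open>card J > k\<close>; the
  rows \<open>d - j\<close>, \<open>j \<in> J\<close>, vanish left of the antidiagonal.\<close>

lemma schmidt_rank_gt_if_annihilated:
  assumes indep: "evaluations_independent k \<Phi>"
    and annihilated: "\<And>\<phi> d. \<phi> \<in> \<Phi> \<Longrightarrow> antidiag_pairing \<phi> d M = 0"
    and "M \<noteq> 0"
    and supp: "\<And>i j. M i j \<noteq> 0 \<Longrightarrow> i < m \<and> j < n"
  shows "k < schmidt_rank m n M"
proof -
  obtain d where "\<exists>j\<le>d. M (d - j) j \<noteq> 0" and below: "\<And>i j. i + j < d \<Longrightarrow> M i j = 0"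
    using lowest_antidiagonal[OF \<open>M \<noteq> 0\<close>] by blast
  define J where "J = {j. j \<le> d \<and> M (d - j) j \<noteq> 0}"
  have "finite J" "J \<noteq> {}"
    using \<open>\<exists>j\<le>d. M (d - j) j \<noteq> 0\<close> by (auto simp: J_def)
  have "k < card J"
  proof (rule ccontr)
    assume "\<not> k < card J"
    then have "card J \<le> k"
      by simp
    moreover have "\<forall>\<phi>\<in>\<Phi>. (\<Sum>j\<in>J. M (d - j) j * of_real (\<phi> j)) = 0"
    proof
      fix \<phi> assume "\<phi> \<in> \<Phi>"
      have "(\<Sum>j\<in>J. M (d - j) j * of_real (\<phi> j)) = antidiag_pairing \<phi> d M"
        unfolding antidiag_pairing_def by (rule sum.mono_neutral_left) (auto simp: J_def)
      then show "(\<Sum>j\<in>J. M (d - j) j * of_real (\<phi> j)) = 0"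
        using annihilated[OF \<open>\<phi> \<in> \<Phi>\<close>] by simp
    qed
    ultimately have "\<forall>j\<in>J. M (d - j) j = 0"
      using indep[unfolded evaluations_independent_def, rule_format, of J "\<lambda>j. M (d - j) j"]
        \<open>finite J\<close> by blast
    then show False
      using \<open>J \<noteq> {}\<close> by (auto simp: J_def)
  qed
  also have "card J \<le> schmidt_rank m n M"
  proof -
    obtain u v where dec: "\<forall>i<m. \<forall>j<n. M i j = (\<Sum>l<schmidt_rank m n M. u l i * v l j)"
      by (rule schmidt_rank_decomposition)
    have "J \<subseteq> {..<n}" "(\<lambda>j. d - j) ` J \<subseteq> {..<m}"
      using supp by (auto simp: J_def)
    moreover have "M (d - j) j \<noteq> 0" if "j \<in> J" for j
      using that by (simp add: J_def)
    moreover have "M (d - j) j' = 0" if "j \<in> J" "j' < j" for j j'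
      using that by (intro below) (auto simp: J_def)
    ultimately show ?thesis
      using card_le_if_triangular[OF dec \<open>finite J\<close>] by simp
  qed
  finally show ?thesis .
qed

section \<open>Lucas sequences\<close>

text \<open>The Lucas sequence \<open>U\<^sub>t(b, 1)\<close>, i.e. the Chebyshev polynomial \<open>U\<^sub>t\<^sub>-\<^sub>1(b/2)\<close>.\<close>

fun lucas_U :: "real \<Rightarrow> nat \<Rightarrow> real" where
  "lucas_U b 0 = 0"
| "lucas_U b (Suc 0) = 1"
| "lucas_U b (Suc (Suc t)) = b * lucas_U b (Suc t) - lucas_U b t"

lemma lucas_U_uminus: "lucas_U (- b) t = (- 1) ^ Suc t * lucas_U b t"
  by (induction b t rule: lucas_U.induct) (simp_all add: algebra_simps)

lemma lucas_U_casoratian: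
  "lucas_U b s * lucas_U b (Suc (s + t)) - lucas_U b (s + t) * lucas_U b (Suc s) = - lucas_U b t"
proof (induction s)
  case (Suc s)
  then show ?case by (simp add: algebra_simps)
qed simp

lemma lucas_U_growth:
  assumes "2 \<le> b"
  shows "1 \<le> lucas_U b (Suc t) - lucas_U b t \<and> real t \<le> lucas_U b t"
proof (induction t)
  case (Suc t)
  have "lucas_U b (Suc (Suc t)) - lucas_U b (Suc t)
      = (lucas_U b (Suc t) - lucas_U b t) + (b - 2) * lucas_U b (Suc t)"
    by (simp add: algebra_simps)
  moreover have "0 \<le> (b - 2) * lucas_U b (Suc t)"
    using Suc assms by simp
  ultimately show ?case using Suc by simp
qed simp

lemma lucas_U_abs_ge:
  assumes "2 \<le> \<bar>b\<bar>"
  shows "real t \<le> \<bar>lucas_U b t\<bar>"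
proof (cases "2 \<le> b")
  case True
  then show ?thesis using lucas_U_growth[of b t] by simp
next
  case False
  then have "2 \<le> - b" using assms by simp
  then show ?thesis using lucas_U_growth[of "- b" t] lucas_U_uminus[of "- b" t] by (simp add: abs_mult)
qed

lemma lucas_U_nonzero: "2 \<le> \<bar>b\<bar> \<Longrightarrow> 0 < t \<Longrightarrow> lucas_U b t \<noteq> 0"
  using lucas_U_abs_ge[of b t] by auto

lemma lucas_U_increment_strict_mono:
  assumes "2 < b"
  shows "strict_mono (\<lambda>t. lucas_U b (Suc t) - lucas_U b t)"
unfolding strict_mono_Suc_iff
proof
  fix t
  have "1 \<le> lucas_U b (Suc t)"
    using lucas_U_growth[of b "Suc t"] assms by simp
  then have "0 < (b - 2) * lucas_U b (Suc t)"
    using assms by simp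
  then show "lucas_U b (Suc t) - lucas_U b t < lucas_U b (Suc (Suc t)) - lucas_U b (Suc t)"
    by (simp add: algebra_simps)
qed

lemma lucas_U_superadditive:
  assumes "2 < b" "0 < p" "0 < q"
  shows "lucas_U b p + lucas_U b q < lucas_U b (p + q)"
  using assms(2)
proof (induction p rule: nat_induct_non_zero)
  case 1
  show ?case
    using strict_monoD[OF lucas_U_increment_strict_mono[OF assms(1)] assms(3)] by simp
next
  case (Suc p)
  have "lucas_U b (Suc p) - lucas_U b p < lucas_U b (Suc (p + q)) - lucas_U b (p + q)"
    using strict_monoD[OF lucas_U_increment_strict_mono[OF assms(1)], of p "p + q"] assms(3) by simp
  then show ?case using Suc.IH by simp
qed

lemma evaluations_independent_lucas:
  assumes "2 \<le> \<bar>b\<bar>"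
  shows "evaluations_independent 2 {lucas_U b, \<lambda>t. lucas_U b (Suc t)}"
proof (rule evaluations_independent_2I)
  fix x y :: nat
  assume "x < y"
  then obtain p where "y = x + p" "0 < p"
    using less_imp_add_positive by blast
  then show "lucas_U b x * lucas_U b (Suc y) - lucas_U b y * lucas_U b (Suc x) \<noteq> 0"
    using lucas_U_casoratian[of b x p] lucas_U_nonzero[OF assms] by simp
qed

lemma evaluations_independent_lucas_alternating:
  assumes "2 < b"
  shows "evaluations_independent 3 {lucas_U (- b), \<lambda>t. lucas_U (- b) (Suc t), \<lambda>t. (- 1) ^ t}"
proof (rule evaluations_independent_3I)
  fix x y z :: nat
  assume "x < y" "y < z"
  then obtain p q where "0 < p" "0 < q" and y: "y = x + p" and z: "z = x + p + q"
    by (metis less_imp_add_positive)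
  let ?U = "lucas_U (- b)"
  \<comment> \<open>Expand along the last column into Casoratians, then trade \<open>U(-b)\<close> for \<open>U(b)\<close>.\<close>
  define C where "C u v = ?U u * ?U (Suc v) - ?U v * ?U (Suc u)" for u v
  have C: "C u (u + t) = - ?U t" for u t
    using lucas_U_casoratian[of "- b" u t] by (simp add: C_def)
  have "?U x * (?U (Suc y) * (- 1) ^ z - ?U (Suc z) * (- 1) ^ y)
      - ?U y * (?U (Suc x) * (- 1) ^ z - ?U (Suc z) * (- 1) ^ x)
      + ?U z * (?U (Suc x) * (- 1) ^ y - ?U (Suc y) * (- 1) ^ x)
      = (- 1) ^ z * C x y - (- 1) ^ y * C x z + (- 1) ^ x * C y z"
    by (simp add: C_def algebra_simps)
  also have "\<dots> = (- 1) ^ Suc x * (?U q - (- 1) ^ p * ?U (p + q) + (- 1) ^ (p + q) * ?U p)"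
    using C[of x p] C[of x "p + q"] C[of "x + p" q] by (simp add: y z power_add algebra_simps)
  also have "\<dots> = (- 1) ^ (x + q) * (lucas_U b q - lucas_U b (p + q) + lucas_U b p)"
    by (simp add: lucas_U_uminus minus_one_power_iff algebra_simps)
  finally show "?U x * (?U (Suc y) * (- 1) ^ z - ?U (Suc z) * (- 1) ^ y)
      - ?U y * (?U (Suc x) * (- 1) ^ z - ?U (Suc z) * (- 1) ^ x)
      + ?U z * (?U (Suc x) * (- 1) ^ y - ?U (Suc y) * (- 1) ^ x) \<noteq> 0"
    using lucas_U_superadditive[OF assms \<open>0 < p\<close> \<open>0 < q\<close>] by simp
qed

section \<open>The subspaces S and T\<close>

lemma S_gen_support:
  "S_gen a i j p q \<noteq> 0 \<Longrightarrow> (p, q) \<in> {(i - 1, j + 1), (i, j), (i + 1, j - 1)}"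
  by (auto simp: S_gen_def ket_def tscale_def split: if_splits)

lemma T_gen_support:
  "T_gen a i j p q \<noteq> 0 \<Longrightarrow> (p, q) \<in> {(i - 2, j + 1), (i - 1, j), (i, j - 1), (i + 1, j - 2)}"
  by (auto simp: T_gen_def ket_def tscale_def split: if_splits)

lemma T_gen_eq_S_gen_add:
  "2 \<le> i \<Longrightarrow> 2 \<le> j \<Longrightarrow> T_gen a i j = S_gen a i (j - 1) + S_gen a (i - 1) j"
  by (auto simp: T_gen_def S_gen_def ket_def tscale_def fun_eq_iff algebra_simps)

lemma antidiag_pairing_S_gen:
  "1 \<le> i \<Longrightarrow> 1 \<le> j \<Longrightarrow> antidiag_pairing \<phi> d (S_gen a i j)
     = (if i + j = d then of_real (\<phi> (j + 1) + a * \<phi> j + \<phi> (j - 1)) else 0)"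
  by (simp add: S_gen_def antidiag_pairing_linear antidiag_pairing_ket)

lemma S_space_eq: "S_space m n a = cspan ((\<lambda>(i, j). S_gen a i j) ` ({1..m - 2} \<times> {1..n - 2}))"
proof -
  have "{S_gen a i j |i j. 1 \<le> i \<and> i \<le> m - 2 \<and> 1 \<le> j \<and> j \<le> n - 2}
      = (\<lambda>(i, j). S_gen a i j) ` ({1..m - 2} \<times> {1..n - 2})"
    by auto blast
  then show ?thesis by (simp add: S_space_def)
qed

lemma T_space_eq: "T_space m n a = cspan ((\<lambda>(i, j). T_gen a i j) ` ({2..m - 2} \<times> {2..n - 2}))"
proof -
  have "{T_gen a i j |i j. 2 \<le> i \<and> i \<le> m - 2 \<and> 2 \<le> j \<and> j \<le> n - 2}
      = (\<lambda>(i, j). T_gen a i j) ` ({2..m - 2} \<times> {2..n - 2})"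
    by auto blast
  then show ?thesis by (simp add: T_space_def)
qed

lemma S_gen_in_S_space:
  "1 \<le> i \<Longrightarrow> i \<le> m - 2 \<Longrightarrow> 1 \<le> j \<Longrightarrow> j \<le> n - 2 \<Longrightarrow> S_gen a i j \<in> S_space m n a"
  unfolding S_space_def cspan_def by (intro tensor.span_base) blast

lemma T_space_subset_S_space: "T_space m n a \<subseteq> S_space m n a"
proof -
  have "T_gen a i j \<in> S_space m n a" if "2 \<le> i" "i \<le> m - 2" "2 \<le> j" "j \<le> n - 2" for i j
  proof -
    have "S_gen a i (j - 1) \<in> S_space m n a" "S_gen a (i - 1) j \<in> S_space m n a"
      using that by (simp_all add: S_gen_in_S_space)
    then show ?thesis
      using that T_gen_eq_S_gen_add unfolding S_space_def cspan_def by (simp add: tensor.span_add)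
  qed
  then have "{T_gen a i j |i j. 2 \<le> i \<and> i \<le> m - 2 \<and> 2 \<le> j \<and> j \<le> n - 2} \<subseteq> S_space m n a"
    by blast
  moreover have "tensor.subspace (S_space m n a)"
    by (simp add: S_space_def cspan_def tensor.subspace_span)
  ultimately show ?thesis
    unfolding T_space_def cspan_def by (rule tensor.span_minimal)
qed

lemma S_space_supported:
  assumes "M \<in> S_space m n a" "M i j \<noteq> 0"
  shows "i < m \<and> j < n"
  using assms(1)[unfolded S_space_def] _ assms(2)
proof (rule cspan_supported)
  fix g p q
  assume "g \<in> {S_gen a i j |i j. 1 \<le> i \<and> i \<le> m - 2 \<and> 1 \<le> j \<and> j \<le> n - 2}" "g p q \<noteq> 0"
  then obtain i' j' where "g = S_gen a i' j'" "1 \<le> i'" "i' \<le> m - 2" "1 \<le> j'" "j' \<le> n - 2"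
    "S_gen a i' j' p q \<noteq> 0"
    by blast
  then show "p < m \<and> q < n"
    using S_gen_support[of a i' j' p q] by auto
qed

lemma S_space_annihilated:
  assumes "\<And>t. \<phi> (Suc (Suc t)) + a * \<phi> (Suc t) + \<phi> t = 0" and "M \<in> S_space m n a"
  shows "antidiag_pairing \<phi> d M = 0"
  using assms(2)[unfolded S_space_def]
proof (rule antidiag_pairing_cspan)
  fix g
  assume "g \<in> {S_gen a i j |i j. 1 \<le> i \<and> i \<le> m - 2 \<and> 1 \<le> j \<and> j \<le> n - 2}"
  then obtain i j where "g = S_gen a i j" "1 \<le> i" "1 \<le> j"
    by blast
  moreover from \<open>1 \<le> j\<close> obtain t where "j = Suc t"
    by (cases j) auto
  ultimately show "antidiag_pairing \<phi> d g = 0"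
    using assms(1)[of t] by (simp add: antidiag_pairing_S_gen)
qed

text \<open>A generator of T pairs like an S-generator against \<open>\<lambda>t. \<phi> t + \<phi> (Suc t)\<close>, which is zero here.\<close>

lemma T_space_annihilated:
  assumes "\<And>t. \<phi> (Suc t) = - \<phi> t" and "M \<in> T_space m n a"
  shows "antidiag_pairing \<phi> d M = 0"
  using assms(2)[unfolded T_space_def]
proof (rule antidiag_pairing_cspan)
  fix g
  assume "g \<in> {T_gen a i j |i j. 2 \<le> i \<and> i \<le> m - 2 \<and> 2 \<le> j \<and> j \<le> n - 2}"
  then obtain i j where "g = T_gen a i j" "2 \<le> i" "2 \<le> j"
    by blast
  moreover from \<open>2 \<le> j\<close> obtain t where "j = Suc (Suc t)"
    by (metis add_2_eq_Suc le_add_diff_inverse)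
  ultimately show "antidiag_pairing \<phi> d g = 0"
    using assms(1) by (simp add: T_gen_eq_S_gen_add antidiag_pairing_linear antidiag_pairing_S_gen)
qed

lemma schmidt_rank_S_space_gt_2:
  assumes "2 \<le> \<bar>a\<bar>" "M \<in> S_space m n a" "M \<noteq> 0"
  shows "2 < schmidt_rank m n M"
proof (rule schmidt_rank_gt_if_annihilated)
  show "evaluations_independent 2 {lucas_U (- a), \<lambda>t. lucas_U (- a) (Suc t)}"
    using assms(1) by (intro evaluations_independent_lucas) simp
  fix \<phi> d
  assume "\<phi> \<in> {lucas_U (- a), \<lambda>t. lucas_U (- a) (Suc t)}"
  then show "antidiag_pairing \<phi> d M = 0"
    by (auto intro!: S_space_annihilated[OF _ assms(2)])
qed (use assms S_space_supported in blast)+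

lemma schmidt_rank_T_space_gt_3:
  assumes "2 < a" "M \<in> T_space m n a" "M \<noteq> 0"
  shows "3 < schmidt_rank m n M"
proof (rule schmidt_rank_gt_if_annihilated)
  show "evaluations_independent 3 {lucas_U (- a), \<lambda>t. lucas_U (- a) (Suc t), \<lambda>t. (- 1) ^ t}"
    using assms(1) by (rule evaluations_independent_lucas_alternating)
  have "M \<in> S_space m n a"
    using assms(2) T_space_subset_S_space by blast
  then show "antidiag_pairing \<phi> d M = 0"
    if \<phi>: "\<phi> \<in> {lucas_U (- a), \<lambda>t. lucas_U (- a) (Suc t), \<lambda>t. (- 1) ^ t}" for \<phi> d
  proof -
    consider "\<phi> = lucas_U (- a) \<or> \<phi> = (\<lambda>t. lucas_U (- a) (Suc t))" | "\<phi> = (\<lambda>t. (- 1) ^ t)"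
      using \<phi> by blast
    then show ?thesis
    proof cases
      case 1
      then show ?thesis
        using \<open>M \<in> S_space m n a\<close> by (auto intro!: S_space_annihilated)
    next
      case 2
      then show ?thesis
        using assms(2) by (auto intro!: T_space_annihilated)
    qed
  qed
  show "M i j \<noteq> 0 \<Longrightarrow> i < m \<and> j < n" for i j
    using \<open>M \<in> S_space m n a\<close> S_space_supported by blast
qed (rule assms(3))

lemma S_gen_pivot: "S_gen a i j (i + 1) (j - 1) = 1"
  by (auto simp: S_gen_def ket_def tscale_def)

lemma T_gen_pivot: "T_gen a i j (i + 1) (j - 2) = 1"
  by (auto simp: T_gen_def ket_def tscale_def)

lemma cdim_S_space: "cdim (S_space m n a) = (m - 2) * (n - 2)"
proof -
  have "cdim (S_space m n a) = card ({1..m - 2} \<times> {1..n - 2})"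
    unfolding S_space_eq
  proof (rule cdim_cspan_if_pivots[where pr = "\<lambda>(i, j). i + 1" and pc = "\<lambda>(i, j). j - 1" and key = snd])
    fix x y
    assume x: "x \<in> {1..m - 2} \<times> {1..n - 2}" and y: "y \<in> {1..m - 2} \<times> {1..n - 2}" and "y \<noteq> x"
      and nz: "(case y of (i, j) \<Rightarrow> S_gen a i j) (case x of (i, j) \<Rightarrow> i + 1) (case x of (i, j) \<Rightarrow> j - 1) \<noteq> 0"
    obtain i j i' j' where "x = (i, j)" "y = (i', j')"
      by force
    then have "S_gen a i' j' (i + 1) (j - 1) \<noteq> 0"
      using nz by simp
    then have "(i + 1, j - 1) \<in> {(i' - 1, j' + 1), (i', j'), (i' + 1, j' - 1)}"
      by (rule S_gen_support)
    then show "snd y < snd x"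
      using x y \<open>y \<noteq> x\<close> \<open>x = (i, j)\<close> \<open>y = (i', j')\<close> by auto
  qed (use S_gen_pivot in \<open>auto simp: case_prod_beta\<close>)
  then show ?thesis
    by simp
qed

lemma cdim_T_space: "cdim (T_space m n a) = (m - 3) * (n - 3)"
proof -
  have "cdim (T_space m n a) = card ({2..m - 2} \<times> {2..n - 2})"
    unfolding T_space_eq
  proof (rule cdim_cspan_if_pivots[where pr = "\<lambda>(i, j). i + 1" and pc = "\<lambda>(i, j). j - 2" and key = snd])
    fix x y
    assume x: "x \<in> {2..m - 2} \<times> {2..n - 2}" and y: "y \<in> {2..m - 2} \<times> {2..n - 2}" and "y \<noteq> x"
      and nz: "(case y of (i, j) \<Rightarrow> T_gen a i j) (case x of (i, j) \<Rightarrow> i + 1) (case x of (i, j) \<Rightarrow> j - 2) \<noteq> 0"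
    obtain i j i' j' where "x = (i, j)" "y = (i', j')"
      by force
    then have "T_gen a i' j' (i + 1) (j - 2) \<noteq> 0"
      using nz by simp
    then have "(i + 1, j - 2) \<in> {(i' - 2, j' + 1), (i' - 1, j'), (i', j' - 1), (i' + 1, j' - 2)}"
      by (rule T_gen_support)
    then show "snd y < snd x"
      using x y \<open>y \<noteq> x\<close> \<open>x = (i, j)\<close> \<open>y = (i', j')\<close> by auto
  qed (use T_gen_pivot in \<open>auto simp: case_prod_beta\<close>)
  then show ?thesis
    by simp
qed

lemma S_gen_1_1_notin_T_space:
  assumes "a \<noteq> 2"
  shows "S_gen a 1 1 \<notin> T_space m n a"
proof
  assume "S_gen a 1 1 \<in> T_space m n a"
  then have "antidiag_pairing (\<lambda>t. (- 1) ^ t) 2 (S_gen a 1 1) = 0"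
    by (intro T_space_annihilated) simp_all
  moreover have "antidiag_pairing (\<lambda>t. (- 1) ^ t) 2 (S_gen a 1 1) = of_real (2 - a)"
    by (simp add: antidiag_pairing_S_gen)
  ultimately have "complex_of_real (2 - a) = 0"
    by simp
  then have "2 - a = 0"
    by (simp only: of_real_eq_0_iff)
  with assms show False
    by simp
qed

lemma schmidt_rank_S_gen_1_1:
  assumes "2 \<le> \<bar>a\<bar>" "3 \<le> m" "3 \<le> n"
  shows "schmidt_rank m n (S_gen a 1 1) = 3"
proof (rule antisym)
  show "schmidt_rank m n (S_gen a 1 1) \<le> 3"
    by (rule schmidt_rank_le_rows) (use S_gen_support in fastforce)
  have "S_gen a 1 1 \<in> S_space m n a"
    using assms by (intro S_gen_in_S_space) simp_all
  moreover have "S_gen a 1 1 \<noteq> 0"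
    by (auto simp: S_gen_def ket_def tscale_def fun_eq_iff)
  ultimately show "3 \<le> schmidt_rank m n (S_gen a 1 1)"
    using schmidt_rank_S_space_gt_2[OF assms(1)] by fastforce
qed

theorem theorem5p8:
  fixes m n :: nat and a :: real
  assumes "min m n \<ge> 4"
  shows "T_space m n a \<subseteq> S_space m n a
    \<and> (\<bar>a\<bar> \<ge> 2 \<longrightarrow>
           (\<forall>psi \<in> S_space m n a. psi \<noteq> 0 \<longrightarrow> \<not> schmidt_rank m n psi \<le> 2)
           \<and> cdim (S_space m n a) = (m - 2) * (n - 2))
    \<and> (a > 4 \<longrightarrow>
           (\<forall>psi \<in> T_space m n a. psi \<noteq> 0 \<longrightarrow> \<not> schmidt_rank m n psi \<le> 3)
           \<and> cdim (T_space m n a) = (m - 3) * (n - 3))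
    \<and> (a > 4 \<longrightarrow>
           (\<exists>psi \<in> S_space m n a - T_space m n a. schmidt_rank m n psi = 3))"
proof (intro conjI impI)
  show "T_space m n a \<subseteq> S_space m n a"
    by (rule T_space_subset_S_space)
  show "\<forall>psi \<in> S_space m n a. psi \<noteq> 0 \<longrightarrow> \<not> schmidt_rank m n psi \<le> 2" if "2 \<le> \<bar>a\<bar>"
    using schmidt_rank_S_space_gt_2[OF that] by (simp add: not_le)
  show "\<forall>psi \<in> T_space m n a. psi \<noteq> 0 \<longrightarrow> \<not> schmidt_rank m n psi \<le> 3" if "4 < a"
    using schmidt_rank_T_space_gt_3[of a] that by (simp add: not_le)
  show "\<exists>psi \<in> S_space m n a - T_space m n a. schmidt_rank m n psi = 3" if "4 < a"
  proof
    have "3 \<le> m" "3 \<le> n" "2 \<le> \<bar>a\<bar>" "a \<noteq> 2"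
      using assms that by auto
    then show "S_gen a 1 1 \<in> S_space m n a - T_space m n a"
      by (intro DiffI S_gen_in_S_space S_gen_1_1_notin_T_space) simp_all
    show "schmidt_rank m n (S_gen a 1 1) = 3"
      using schmidt_rank_S_gen_1_1 \<open>3 \<le> m\<close> \<open>3 \<le> n\<close> \<open>2 \<le> \<bar>a\<bar>\<close> by blast
  qed
qed (simp_all add: cdim_S_space cdim_T_space)

end
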